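(* Let $H$ be a Hilbert space and $A$ a linear, closed, densely defined operator in $H$. Let $T:=A^*A$ (a densely defined selfadjoint nonnegative operator) with resolution of the identity $E_s$, and for $a>0$ let $T_a:=T+aI$; denote by $T_a^{-1}A^*$ the closure of this densely defined operator, which is a bounded operator on all of $H$. Fix $p\in(0,1)$ and $k_p>0$, and let $$\mathcal K:=\Big\{u\in H:\ \int_0^\infty s^{-2p}\,d(E_su,u)\le k_p^2\Big\}.$$ For $\delta>0$ and $f_\delta\in H$ let $S_\delta:=\{v\in\mathcal K\cap D(A):\ \|Av-f_\delta\|\le\delta\}$, and let $R(\delta):=T_{a(\delta)}^{-1}A^*$ where $a(\delta)>0$. (i) If $\lim_{\delta\to0}a(\delta)=0$ and $\lim_{\delta\to0}\delta/a(\delta)^{1/2}=0$, then $R(\delta)$ is a regularizer, i.e. there is $\eta(\delta)\to0$ as $\delta\to0$ with $\sup_{v\in S_\delta}\|R(\delta)f_\delta-v\|\le\eta(\delta)$. (ii) If $a(\delta)=b_p\delta^{\frac{2}{2p+1}}$, then $$\sup_{y\in\mathcal K\cap D(A),\ \|Ay-f_\delta\|\le\delta}\|R(\delta)f_\delta-y\|\le C_p\,\delta^{\frac{2p}{2p+1}},$$ where $c_p=p^p(1-p)^{1-p}$, $b_p=(4pc_pk_p)^{-\frac{2}{2p+1}}$, and $C_p=\frac{1}{2\sqrt{b_p}}+c_pk_pb_p^p$. Moreover, this choice $a=a(\delta)$ is the minimizer over $a>0$ of the function $a\mapsto\frac{\delta}{2\sqrt a}+c_pk_pa^p$, and the minimum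 value is $C_p\delta^{\frac{2p}{2p+1}}$.
   Context: A family of operators $R(\delta)$ is called a regularizer (in the new sense of the paper) for $Au=f$ if $\sup_{v\in S_\delta}\|R(\delta)f_\delta-v\|\le\eta(\delta)\to0$ as $\delta\to0$, where $S_\delta$ consists of all $v$ in the a priori set $\mathcal K$ satisfying $\|Av-f_\delta\|\le\delta$, $f_\delta$ being the noisy data. *)

theory Defs
  imports "HOL-Analysis.Analysis"
begin

text \<open>Unbounded operators on a (real) Hilbert space are represented by a pair
  (domain, function): the domain is a set and the function is only meaningful on it.\<close>

definition linear_op :: "'a::real_vector set \<Rightarrow> ('a \<Rightarrow> 'b::real_vector) \<Rightarrow> bool" where
  "linear_op D A \<longleftrightarrow> subspace D \<and>
     (\<forall>x\<in>D. \<forall>y\<in>D. A (x + y) = A x + A y) \<and> (\<forall>c. \<forall>x\<in>D. A (c *\<^sub>R x) = c *\<^sub>R A x)"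

definition adj_dom :: "'a::real_inner set \<Rightarrow> ('a \<Rightarrow> 'a) \<Rightarrow> 'a set" where
  "adj_dom D A = {y. \<exists>z. \<forall>x\<in>D. inner (A x) y = inner x z}"

definition adj :: "'a::real_inner set \<Rightarrow> ('a \<Rightarrow> 'a) \<Rightarrow> 'a \<Rightarrow> 'a" where
  "adj D A y = (THE z. \<forall>x\<in>D. inner (A x) y = inner x z)"

definition T_dom :: "'a::real_inner set \<Rightarrow> ('a \<Rightarrow> 'a) \<Rightarrow> 'a set" where
  "T_dom D A = {x \<in> D. A x \<in> adj_dom D A}"

definition T_op :: "'a::real_inner set \<Rightarrow> ('a \<Rightarrow> 'a) \<Rightarrow> 'a \<Rightarrow> 'a" where
  "T_op D A x = adj D A (A x)"

definition spec_meas :: "(real \<Rightarrow> 'a \<Rightarrow> 'a) \<Rightarrow> 'a::real_inner \<Rightarrow> real measure" where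
  "spec_meas E u = interval_measure (\<lambda>s. inner (E s u) u)"

text \<open>E is a resolution of the identity (spectral family) and the operator (TD, T)
  equals the spectral integral of s dE_s.\<close>
definition resolution_of_identity ::
  "(real \<Rightarrow> 'a \<Rightarrow> 'a) \<Rightarrow> 'a::{real_inner,complete_space} set \<Rightarrow> ('a \<Rightarrow> 'a) \<Rightarrow> bool" where
  "resolution_of_identity E TD T \<longleftrightarrow>
     (\<forall>s. bounded_linear (E s) \<and> (\<forall>x. E s (E s x) = E s x) \<and>
          (\<forall>x y. inner (E s x) y = inner x (E s y))) \<and>
     (\<forall>s t x. s \<le> t \<longrightarrow> E s (E t x) = E s x) \<and>
     (\<forall>s x. ((\<lambda>t. E t x) \<longlongrightarrow> E s x) (at_right s)) \<and>
     (\<forall>x. ((\<lambda>t. E t x) \<longlongrightarrow> 0) at_bot) \<and>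
     (\<forall>x. ((\<lambda>t. E t x) \<longlongrightarrow> x) at_top) \<and>
     TD = {u. (\<integral>\<^sup>+ s. ennreal (s\<^sup>2) \<partial>spec_meas E u) < \<infinity>} \<and>
     (\<forall>u\<in>TD. \<forall>v\<in>TD. inner (T u) v =
        (integral\<^sup>L (spec_meas E (u + v)) (\<lambda>s. s) - integral\<^sup>L (spec_meas E (u - v)) (\<lambda>s. s)) / 4)"

text \<open>R(a) = closure of (T + aI)^{-1} A*, i.e. the bounded linear operator on the whole
  space that agrees with (T + aI)^{-1} A* on D(A*).\<close>
definition Rop :: "'a::{real_inner,complete_space} set \<Rightarrow> ('a \<Rightarrow> 'a) \<Rightarrow> real \<Rightarrow> 'a \<Rightarrow> 'a" where
  "Rop D A a = (THE L. bounded_linear L \<and>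
      (\<forall>y\<in>adj_dom D A. L y \<in> T_dom D A \<and> T_op D A (L y) + a *\<^sub>R L y = adj D A y))"

text \<open>The a priori set K = {u. int_0^infty s^(-2p) d(E_s u,u) <= k_p^2}; at s = 0 the
  integrand s^(-2p) is +infinity.\<close>
definition Kset :: "(real \<Rightarrow> 'a \<Rightarrow> 'a) \<Rightarrow> real \<Rightarrow> real \<Rightarrow> 'a::real_inner set" where
  "Kset E p k = {u. set_nn_integral (spec_meas E u) {0..}
      (\<lambda>s. if s = 0 then \<infinity> else ennreal (s powr (-2 * p))) \<le> ennreal (k\<^sup>2)}"

definition Sdelta :: "'a set \<Rightarrow> 'a set \<Rightarrow> ('a \<Rightarrow> 'a::real_normed_vector) \<Rightarrow> real \<Rightarrow> 'a \<Rightarrow> 'a set" where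
  "Sdelta K D A \<delta> fd = {v \<in> K \<inter> D. norm (A v - fd) \<le> \<delta>}"

definition c_p :: "real \<Rightarrow> real" where
  "c_p p = p powr p * (1 - p) powr (1 - p)"

definition b_p :: "real \<Rightarrow> real \<Rightarrow> real" where
  "b_p p k = (4 * p * c_p p * k) powr (- 2 / (2 * p + 1))"

definition C_p :: "real \<Rightarrow> real \<Rightarrow> real" where
  "C_p p k = 1 / (2 * sqrt (b_p p k)) + c_p p * k * b_p p k powr p"

end

theory Submission
  imports Defs "HOL-Probability.Distribution_Functions"
begin

text \<open>Write \<open>R(a) = (T + a)\<^sup>-\<^sup>1 A\<^sup>*\<close>. For \<open>y \<in> D(A)\<close> let \<open>(T + a) x = y\<close>; then \<open>R(a) A y = y - a x\<close>, so
  \<open>R(a) f\<^sub>\<delta> - y = R(a) (f\<^sub>\<delta> - A y) - a x\<close>. The first term is at most \<open>\<delta> / (2 \<surd>a)\<close>, because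
  \<open>u = R(a) h\<close> satisfies \<open>\<parallel>A u\<parallel>\<^sup>2 + a \<parallel>u\<parallel>\<^sup>2 = \<langle>h, A u\<rangle>\<close>. For the second, the spectral theorem gives
  \<open>\<parallel>a x\<parallel>\<^sup>2 = \<integral> (a / (s + a))\<^sup>2 d(E\<^sub>s y, y) \<le> (c\<^sub>p a\<^sup>p)\<^sup>2 \<integral> s\<^sup>-\<^sup>2\<^sup>p d(E\<^sub>s y, y) \<le> (c\<^sub>p k\<^sub>p a\<^sup>p)\<^sup>2\<close>
  for \<open>y \<in> K\<close>, where \<open>a / (s + a) \<le> c\<^sub>p a\<^sup>p s\<^sup>-\<^sup>p\<close> is Young's inequality. Without a functional calculus
  the middle inequality is proved band by band on a geometric grid \<open>s\<^sub>0 q\<^sup>i\<close>, letting \<open>s\<^sub>0 \<rightarrow> 0\<close> and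
  \<open>q \<rightarrow> 1\<close> at the end. Both parts of the theorem follow from the bound
  \<open>\<delta> / (2 \<surd>a) + c\<^sub>p k\<^sub>p a\<^sup>p\<close>; \<open>a = b\<^sub>p \<delta>\<^sup>2\<^sup>/\<^sup>(\<^sup>2\<^sup>p\<^sup>+\<^sup>1\<^sup>)\<close> is its unique minimizer.

  The operator \<open>R(a)\<close> is constructed through the weak equation \<open>\<langle>A u, A x\<rangle> + a \<langle>u, x\<rangle> = \<langle>h, A x\<rangle>\<close>,
  solved by orthogonal projection onto the (closed) graph of \<open>A\<close>.\<close>

section \<open>Hilbert space preliminaries\<close>

lemma Cauchy_if_dist_le_sum:
  fixes X :: "nat \<Rightarrow> 'a::metric_space"
  assumes e: "e \<longlonglongrightarrow> 0" and dist_le: "\<And>n k. dist (X n) (X k) \<le> e n + e k"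
  shows "Cauchy X"
proof (rule metric_CauchyI)
  fix \<epsilon> :: real assume "\<epsilon> > 0"
  then obtain N where N: "\<And>n. n \<ge> N \<Longrightarrow> \<bar>e n\<bar> < \<epsilon> / 2"
    using LIMSEQ_D[OF e, of "\<epsilon> / 2"] by auto
  have "dist (X n) (X k) < \<epsilon>" if "n \<ge> N" "k \<ge> N" for n k
    using dist_le[of n k] N[OF that(1)] N[OF that(2)] by linarith
  then show "\<exists>N. \<forall>n\<ge>N. \<forall>k\<ge>N. dist (X n) (X k) < \<epsilon>" by blast
qed

lemma parallelogram_law:
  fixes x y :: "'a::real_inner"
  shows "norm (x + y) ^ 2 + norm (x - y) ^ 2 = 2 * norm x ^ 2 + 2 * norm y ^ 2"
  by (simp add: power2_norm_eq_inner inner_add inner_diff inner_commute)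

lemma infdist_power2_approx:
  fixes S :: "'a::real_normed_vector set"
  assumes "S \<noteq> {}" "0 < e"
  shows "\<exists>m\<in>S. norm (h - m) ^ 2 < infdist h S ^ 2 + e"
proof -
  have "infdist h S < sqrt (infdist h S ^ 2 + e)"
    using infdist_nonneg[of h S] assms(2) by (intro real_less_rsqrt) simp
  then obtain m where "m \<in> S" "dist h m < sqrt (infdist h S ^ 2 + e)"
    using cInf_lessD[of "dist h ` S"] assms(1) by (auto simp: infdist_notempty)
  then have "norm (h - m) ^ 2 < (sqrt (infdist h S ^ 2 + e))\<^sup>2"
    by (intro power_strict_mono) (auto simp: dist_norm)
  with \<open>m \<in> S\<close> assms(2) show ?thesis by auto
qed

text \<open>The midpoint of \<open>x\<close> and \<open>y\<close> lies in \<open>S\<close>; combine with the parallelogram law.\<close>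
lemma norm_diff_power2_le_convex:
  fixes S :: "'a::real_inner set"
  assumes "convex S" "x \<in> S" "y \<in> S"
  shows "norm (x - y) ^ 2 \<le> 2 * norm (h - x) ^ 2 + 2 * norm (h - y) ^ 2 - 4 * infdist h S ^ 2"
proof -
  let ?mid = "(1/2) *\<^sub>R x + (1/2) *\<^sub>R y"
  have "?mid \<in> S" using assms by (intro convexD) auto
  then have "infdist h S ^ 2 \<le> norm (h - ?mid) ^ 2"
    using infdist_le[of ?mid S h] infdist_nonneg[of h S] by (simp add: dist_norm power_mono)
  moreover have "(h - x) + (h - y) = 2 *\<^sub>R (h - ?mid)"
    by (simp add: algebra_simps scaleR_2)
  then have "norm (x - y) ^ 2 = 2 * norm (h - x) ^ 2 + 2 * norm (h - y) ^ 2 - 4 * norm (h - ?mid) ^ 2"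
    using parallelogram_law[of "h - x" "h - y"] by (simp add: norm_minus_commute power_mult_distrib)
  ultimately show ?thesis by linarith
qed

lemma nearest_point_exists:
  fixes S :: "'a::{real_inner,complete_space} set"
  assumes "closed S" "convex S" "S \<noteq> {}"
  shows "\<exists>m\<in>S. \<forall>x\<in>S. norm (h - m) \<le> norm (h - x)"
proof -
  define d where "d = infdist h S"
  have d_le: "d \<le> norm (h - x)" if "x \<in> S" for x
    using infdist_le[OF that, of h] by (simp add: d_def dist_norm)
  have "\<forall>n. \<exists>m\<in>S. norm (h - m) ^ 2 < d\<^sup>2 + 1 / Suc n"
    using infdist_power2_approx[OF assms(3)] by (simp add: d_def)
  then obtain m where mS: "\<And>n. m n \<in> S" and m_close: "\<And>n. norm (h - m n) ^ 2 < d\<^sup>2 + 1 / Suc n"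
    by metis
  have "dist (m n) (m k) \<le> sqrt (2 / Suc n) + sqrt (2 / Suc k)" for n k
  proof -
    have "norm (m n - m k) ^ 2 \<le> 2 / Suc n + 2 / Suc k"
      using norm_diff_power2_le_convex[OF assms(2) mS[of n] mS[of k], of h] m_close[of n] m_close[of k]
      by (simp add: d_def)
    then have "norm (m n - m k) \<le> sqrt (2 / Suc n + 2 / Suc k)" by (simp add: real_le_rsqrt)
    also have "\<dots> \<le> sqrt (2 / Suc n) + sqrt (2 / Suc k)" by (intro sqrt_add_le_add_sqrt) auto
    finally show ?thesis by (simp add: dist_norm)
  qed
  moreover have "(\<lambda>n. sqrt (2 / Suc n)) \<longlonglongrightarrow> 0"
    using tendsto_real_sqrt[OF tendsto_mult[OF tendsto_const LIMSEQ_inverse_real_of_nat, of 2]]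
    by (simp add: divide_inverse)
  ultimately have "Cauchy m" by (intro Cauchy_if_dist_le_sum) auto
  then obtain m0 where lim: "m \<longlonglongrightarrow> m0" using Cauchy_convergent_iff convergent_def by blast
  have "m0 \<in> S" using assms(1) lim mS closed_sequentially by blast
  have "norm (h - m0) ^ 2 \<le> d\<^sup>2"
  proof (rule LIMSEQ_le)
    show "(\<lambda>n. norm (h - m n) ^ 2) \<longlonglongrightarrow> norm (h - m0) ^ 2" by (intro tendsto_intros lim)
    show "(\<lambda>n. d\<^sup>2 + 1 / Suc n) \<longlonglongrightarrow> d\<^sup>2"
      using tendsto_add[OF tendsto_const LIMSEQ_inverse_real_of_nat, of "d\<^sup>2"]
      by (simp add: inverse_eq_divide)
  qed (use m_close less_imp_le in blast)
  then have "norm (h - m0) \<le> d"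
    by (rule power2_le_imp_le) (simp add: d_def infdist_nonneg)
  then show ?thesis using \<open>m0 \<in> S\<close> d_le order.trans by blast
qed

lemma quadratic_nonneg_imp_linear_coeff_0:
  fixes \<alpha> \<beta> :: real
  assumes "\<beta> \<ge> 0" and "\<And>t. 0 \<le> t\<^sup>2 * \<beta> - 2 * t * \<alpha>"
  shows "\<alpha> = 0"
proof -
  define t where "t = \<alpha> / (\<beta> + 1)"
  have \<alpha>: "\<alpha> = t * (\<beta> + 1)" using assms(1) by (simp add: t_def)
  have "0 \<le> t\<^sup>2 * \<beta> - 2 * t * \<alpha>" by (rule assms(2))
  also have "\<dots> = - t\<^sup>2 * (\<beta> + 2)" by (simp add: \<alpha> power2_eq_square algebra_simps)
  finally have "t\<^sup>2 * (\<beta> + 2) \<le> 0" by simp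
  then have "t = 0" using assms(1) by (simp add: mult_le_0_iff)
  then show ?thesis using \<alpha> by simp
qed

lemma orthogonal_projection_exists:
  fixes M :: "'a::{real_inner,complete_space} set"
  assumes "subspace M" "closed M"
  shows "\<exists>m\<in>M. \<forall>v\<in>M. inner (h - m) v = 0"
proof -
  obtain m where m: "m \<in> M" and nearest: "\<And>x. x \<in> M \<Longrightarrow> norm (h - m) \<le> norm (h - x)"
    using nearest_point_exists[of M h] assms subspace_imp_convex subspace_0 by blast
  have "inner (h - m) v = 0" if v: "v \<in> M" for v
  proof (rule quadratic_nonneg_imp_linear_coeff_0[of "norm v ^ 2"])
    fix t :: real
    have "m + t *\<^sub>R v \<in> M" using assms(1) m v by (simp add: subspace_add subspace_scale)
    then have "norm (h - m) ^ 2 \<le> norm ((h - m) - t *\<^sub>R v) ^ 2"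
      using nearest by (simp add: algebra_simps power_mono)
    then show "0 \<le> t\<^sup>2 * norm v ^ 2 - 2 * t * inner (h - m) v"
      unfolding power2_norm_eq_inner by (simp add: inner_diff inner_commute algebra_simps power2_eq_square)
  qed simp
  with m show ?thesis by blast
qed

lemma closed_subspace_eq_UNIV_if_perp_trivial:
  fixes M :: "'a::{real_inner,complete_space} set"
  assumes "subspace M" "closed M" and perp: "\<And>z. (\<And>v. v \<in> M \<Longrightarrow> inner z v = 0) \<Longrightarrow> z = 0"
  shows "M = UNIV"
proof -
  have "h \<in> M" for h
    using orthogonal_projection_exists[OF assms(1,2), of h] perp[of "h - _"] by force
  then show ?thesis by blast
qed

lemma perp_dense_eq_0:
  fixes z :: "'a::real_inner"
  assumes "closure D = UNIV" and "\<And>x. x \<in> D \<Longrightarrow> inner x z = 0"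
  shows "z = 0"
proof -
  have "closed {x. inner x z = 0}" by (intro closed_Collect_eq continuous_intros)
  then have "closure D \<subseteq> {x. inner x z = 0}"
    using assms(2) by (intro closure_minimal) auto
  then have "inner z z = 0" using assms(1) by blast
  then show ?thesis by simp
qed

section \<open>Scalar inequalities\<close>

lemma c_p_pos: "0 < p \<Longrightarrow> p < 1 \<Longrightarrow> 0 < c_p p"
  by (simp add: c_p_def)

text \<open>Young's inequality with weights \<open>p\<close> and \<open>1 - p\<close>, applied to \<open>s / p\<close> and \<open>a / (1 - p)\<close>.\<close>
lemma ratio_le_c_p:
  assumes s: "0 < s" and a: "0 < a" and p: "0 < p" "p < 1"
  shows "a / (s + a) \<le> c_p p * a powr p * s powr (- p)"
proof -
  have "(s / p) powr p * (a / (1 - p)) powr (1 - p) \<le> p * (s / p) + (1 - p) * (a / (1 - p))"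
    by (rule Youngs_inequality_0) (use s a p in auto)
  moreover have "(s / p) powr p * (a / (1 - p)) powr (1 - p) = s powr p * a powr (1 - p) / c_p p"
    using s a p by (simp add: c_p_def powr_divide)
  moreover have "p * (s / p) + (1 - p) * (a / (1 - p)) = s + a" using p by simp
  ultimately have young: "s powr p * a powr (1 - p) \<le> c_p p * (s + a)"
    using c_p_pos[OF p] by (simp add: divide_le_eq mult.commute)
  have "a * s powr p = a powr p * (s powr p * a powr (1 - p))"
    using a by (simp add: powr_add[symmetric] mult_ac)
  also have "\<dots> \<le> a powr p * (c_p p * (s + a))"
    using young by (intro mult_left_mono) auto
  finally show ?thesis
    using s a by (simp add: powr_minus divide_simps mult_ac)
qed

lemma power2_le_if_mult_le:
  fixes c b n :: real
  assumes "0 \<le> c" "0 \<le> n" "c * n\<^sup>2 \<le> b * n"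
  shows "c\<^sup>2 * n\<^sup>2 \<le> b\<^sup>2"
proof (cases "n = 0")
  case False
  then have "c * n \<le> b" using assms by (simp add: power2_eq_square)
  then have "(c * n)\<^sup>2 \<le> b\<^sup>2" using assms by (intro power_mono) auto
  then show ?thesis by (simp add: power_mult_distrib)
qed simp

lemma b_p_pos: "0 < p \<Longrightarrow> p < 1 \<Longrightarrow> 0 < k \<Longrightarrow> 0 < b_p p k"
  using c_p_pos[of p] by (simp add: b_p_def)

lemma b_p_mult_eq:
  assumes "0 < \<delta>" "0 < p" "p < 1" "0 < k"
  shows "b_p p k * \<delta> powr (2 / (2 * p + 1)) = (\<delta> / (4 * p * c_p p * k)) powr (2 / (2 * p + 1))"
  using assms c_p_pos[of p] by (simp add: b_p_def powr_divide powr_minus_divide)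

lemma C_p_eq:
  assumes d: "0 < \<delta>" and p: "0 < p" "p < 1" and k: "0 < k"
  defines "a \<equiv> b_p p k * \<delta> powr (2 / (2 * p + 1))"
  shows "\<delta> / (2 * sqrt a) + c_p p * k * a powr p = C_p p k * \<delta> powr (2 * p / (2 * p + 1))"
proof -
  let ?b = "b_p p k"
  have b: "0 < ?b" using b_p_pos[OF p k] .
  have "sqrt (\<delta> powr (2 / (2 * p + 1))) = \<delta> powr (1 / (2 * p + 1))"
  proof -
    have "2 / (4 * p + 2) = 1 / (2 * p + 1)" using p by (simp add: field_simps)
    then show ?thesis using d by (simp add: powr_half_sqrt[symmetric] powr_powr)
  qed
  moreover have "\<delta> = \<delta> powr (2 * p / (2 * p + 1)) * \<delta> powr (1 / (2 * p + 1))"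
    using d p by (simp add: powr_add[symmetric] field_simps)
  ultimately have "\<delta> / (2 * sqrt a) = 1 / (2 * sqrt ?b) * \<delta> powr (2 * p / (2 * p + 1))"
    using b d by (simp add: a_def real_sqrt_mult field_simps)
  moreover have "a powr p = ?b powr p * \<delta> powr (2 * p / (2 * p + 1))"
    using b d by (simp add: a_def powr_mult powr_powr mult.commute)
  ultimately show ?thesis by (simp add: C_p_def algebra_simps)
qed

lemma strict_min_if_deriv_sign:
  fixes f f' :: "real \<Rightarrow> real"
  assumes m: "0 < m"
    and deriv: "\<And>x. 0 < x \<Longrightarrow> (f has_real_derivative f' x) (at x)"
    and neg: "\<And>x. 0 < x \<Longrightarrow> x < m \<Longrightarrow> f' x < 0"
    and pos: "\<And>x. m < x \<Longrightarrow> 0 < f' x"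
    and a: "0 < a" "a \<noteq> m"
  shows "f m < f a"
proof -
  have cont: "continuous_on {u..v} f" if "0 < u" for u v
    using that by (intro continuous_at_imp_continuous_on ballI DERIV_isCont[OF deriv]) auto
  show ?thesis
  proof (cases "a < m")
    case True
    show ?thesis
      by (rule DERIV_neg_imp_decreasing_open[OF True _ cont[OF a(1)]]) (use deriv neg a in force)
  next
    case False
    with a have "m < a" by simp
    show ?thesis
    proof (rule DERIV_pos_imp_increasing_open[OF \<open>m < a\<close> _ cont[OF m]])
      fix x assume "m < x" "x < a"
      then show "\<exists>y. (f has_real_derivative y) (at x) \<and> 0 < y"
        using deriv[of x] pos[of x] m by auto
    qed
  qed
qed

text \<open>The bound \<open>\<delta> / (2 \<surd>a) + K a\<^sup>p\<close> has derivative \<open>a\<^sup>-\<^sup>3\<^sup>/\<^sup>2 (K p a\<^sup>p\<^sup>+\<^sup>1\<^sup>/\<^sup>2 - \<delta> / 4)\<close>.\<close>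
lemma error_bound_strict_min:
  fixes \<delta> K p a :: real
  assumes d: "0 < \<delta>" and K: "0 < K" and p: "0 < p" and a: "0 < a"
  defines "m \<equiv> (\<delta> / (4 * p * K)) powr (2 / (2 * p + 1))"
  assumes "a \<noteq> m"
  shows "\<delta> / (2 * sqrt m) + K * m powr p < \<delta> / (2 * sqrt a) + K * a powr p"
proof -
  define f where "f x = \<delta> / 2 * x powr (-1/2) + K * x powr p" for x :: real
  define f' where "f' x = \<delta> / 2 * ((-1/2) * x powr (-1/2 - 1)) + K * (p * x powr (p - 1))" for x :: real
  have m_pos: "0 < m" using d K p by (simp add: m_def)
  have m_pow: "K * p * m powr (p + 1/2) = \<delta> / 4"
  proof -
    have "(2 / (2 * p + 1)) * (p + 1/2) = 1" using p by (simp add: field_simps)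
    then show ?thesis using d K p by (simp add: m_def powr_powr)
  qed
  have f_eq: "f x = \<delta> / (2 * sqrt x) + K * x powr p" if "0 < x" for x
    using that by (simp add: f_def powr_minus_divide powr_half_sqrt)
  have f'_eq: "f' x = x powr (-3/2) * (K * p * x powr (p + 1/2) - \<delta> / 4)" if "0 < x" for x
    using that by (simp add: f'_def powr_add[symmetric] algebra_simps)
  have "f m < f a"
  proof (rule strict_min_if_deriv_sign[OF m_pos _ _ _ a \<open>a \<noteq> m\<close>])
    show "(f has_real_derivative f' x) (at x)" if "0 < x" for x
      unfolding f_def f'_def by (intro DERIV_add DERIV_cmult has_real_derivative_powr that)
    show "f' x < 0" if "0 < x" "x < m" for x
    proof -
      have "K * p * x powr (p + 1/2) < K * p * m powr (p + 1/2)"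
        using that K p by (intro mult_strict_left_mono powr_less_mono2) auto
      then show ?thesis using f'_eq[OF that(1)] m_pow that(1) by (simp add: mult_pos_neg)
    qed
    show "0 < f' x" if "m < x" for x
    proof -
      have "K * p * m powr (p + 1/2) < K * p * x powr (p + 1/2)"
        using that K p m_pos by (intro mult_strict_left_mono powr_less_mono2) auto
      then show ?thesis using f'_eq[of x] m_pow that m_pos by simp
    qed
  qed
  then show ?thesis using f_eq[OF a] f_eq[OF m_pos] by simp
qed

lemma b_p_strict_min:
  assumes "0 < \<delta>" "0 < p" "p < 1" "0 < k" "0 < a" "a \<noteq> b_p p k * \<delta> powr (2 / (2 * p + 1))"
  shows "\<delta> / (2 * sqrt (b_p p k * \<delta> powr (2 / (2 * p + 1))))
      + c_p p * k * (b_p p k * \<delta> powr (2 / (2 * p + 1))) powr p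
    < \<delta> / (2 * sqrt a) + c_p p * k * a powr p"
  using error_bound_strict_min[of \<delta> "c_p p * k" p a] assms c_p_pos[of p] b_p_mult_eq[OF assms(1-4)]
  by (simp add: mult.assoc)

lemma error_bound_tendsto_0:
  fixes a :: "real \<Rightarrow> real"
  assumes "\<forall>\<delta>>0. a \<delta> > 0" "(a \<longlongrightarrow> 0) (at_right 0)"
    and "((\<lambda>\<delta>. \<delta> / sqrt (a \<delta>)) \<longlongrightarrow> 0) (at_right 0)" and "0 < p"
  shows "((\<lambda>\<delta>. \<delta> / (2 * sqrt (a \<delta>)) + C * a \<delta> powr p) \<longlongrightarrow> 0) (at_right 0)"
proof -
  have l1: "((\<lambda>\<delta>. \<delta> / (2 * sqrt (a \<delta>))) \<longlongrightarrow> 0) (at_right 0)"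
    using tendsto_divide[OF assms(3) tendsto_const[of 2]] by (simp add: mult.commute)
  have "\<forall>\<^sub>F \<delta> in at_right 0. 0 \<le> a \<delta>"
    using eventually_at_right_less[of "0::real"] by eventually_elim (use assms(1) in auto)
  then have l2: "((\<lambda>\<delta>. a \<delta> powr p) \<longlongrightarrow> 0) (at_right 0)"
    by (rule tendsto_zero_powrI[OF assms(2) tendsto_const _ assms(4)])
  show ?thesis using tendsto_add[OF l1 tendsto_mult[OF tendsto_const l2]] by simp
qed

section \<open>The regularized inverse \<open>(A\<^sup>* A + a)\<^sup>-\<^sup>1 A\<^sup>*\<close>\<close>

locale closed_densely_defined =
  fixes DA :: "'a::{real_inner,complete_space} set" and A :: "'a \<Rightarrow> 'a"
  assumes linear_A: "linear_op DA A"
    and closed_graph: "closed {(x, A x) | x. x \<in> DA}"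
    and dense_dom: "closure DA = UNIV"
begin

abbreviation "Adom \<equiv> adj_dom DA A"
abbreviation "Aadj \<equiv> adj DA A"
abbreviation "TD \<equiv> T_dom DA A"
abbreviation "T \<equiv> T_op DA A"

lemma subspace_dom: "subspace DA"
  using linear_A by (simp add: linear_op_def)

lemma A_add: "x \<in> DA \<Longrightarrow> y \<in> DA \<Longrightarrow> A (x + y) = A x + A y"
  using linear_A by (simp add: linear_op_def)

lemma A_scale: "x \<in> DA \<Longrightarrow> A (c *\<^sub>R x) = c *\<^sub>R A x"
  using linear_A by (simp add: linear_op_def)

lemma A_0: "A 0 = 0"
  using A_scale[of 0 0] subspace_dom by (simp add: subspace_0)

lemma A_diff: "x \<in> DA \<Longrightarrow> y \<in> DA \<Longrightarrow> A (x - y) = A x - A y"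
  using A_add[of x "- y"] A_scale[of y "-1"] subspace_dom by (simp add: subspace_neg)

lemma adj_eqI:
  assumes "\<forall>x\<in>DA. inner (A x) y = inner x z"
  shows "y \<in> Adom" "Aadj y = z"
proof -
  show "y \<in> Adom" using assms unfolding adj_dom_def by blast
  have "w = z" if "\<forall>x\<in>DA. inner (A x) y = inner x w" for w
    using perp_dense_eq_0[OF dense_dom, of "w - z"] that assms by (simp add: inner_diff_right)
  then show "Aadj y = z" unfolding adj_def using assms by (intro the_equality) auto
qed

lemma adj_inner: "y \<in> Adom \<Longrightarrow> x \<in> DA \<Longrightarrow> inner (A x) y = inner x (Aadj y)"
  unfolding adj_dom_def using adj_eqI(2) by fastforce

lemma adj_diff:
  assumes "y \<in> Adom" "y' \<in> Adom"
  shows "y - y' \<in> Adom" "Aadj (y - y') = Aadj y - Aadj y'"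
  using adj_eqI[of "y - y'" "Aadj y - Aadj y'"] adj_inner assms
  by (simp_all add: inner_diff_right)

lemma T_dom_subset: "TD \<subseteq> DA"
  by (auto simp: T_dom_def)

lemma T_diff:
  assumes "x \<in> TD" "y \<in> TD"
  shows "x - y \<in> TD" "T (x - y) = T x - T y"
  using assms adj_diff[of "A x" "A y"] A_diff[of x y] subspace_dom
  by (auto simp: T_dom_def T_op_def subspace_diff)

lemma inner_T: "x \<in> TD \<Longrightarrow> w \<in> DA \<Longrightarrow> inner (T x) w = inner (A x) (A w)"
  using adj_inner[of "A x" w] by (simp add: T_dom_def T_op_def inner_commute)

lemma inner_T_self: "x \<in> TD \<Longrightarrow> inner (T x) x = norm (A x) ^ 2"
  using inner_T[of x x] T_dom_subset by (auto simp: power2_norm_eq_inner)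

text \<open>The weak form of \<open>(A\<^sup>* A + a) u = g + A\<^sup>* h\<close>, meaningful for every \<open>h\<close>.\<close>
definition resolvent_eq :: "real \<Rightarrow> 'a \<Rightarrow> 'a \<Rightarrow> 'a \<Rightarrow> bool" where
  "resolvent_eq a g h u \<longleftrightarrow>
     u \<in> DA \<and> (\<forall>x\<in>DA. inner (A u) (A x) + a * inner u x = inner g x + inner h (A x))"

lemma scaled_graph_subspace: "subspace {(c *\<^sub>R x, A x) | x. x \<in> DA}"
  unfolding subspace_def
proof (intro conjI ballI allI)
  show "0 \<in> {(c *\<^sub>R x, A x) | x. x \<in> DA}"
    using A_0 subspace_0[OF subspace_dom] by (auto simp: zero_prod_def)
next
  fix u v assume "u \<in> {(c *\<^sub>R x, A x) | x. x \<in> DA}" "v \<in> {(c *\<^sub>R x, A x) | x. x \<in> DA}"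
  then obtain x y where "u = (c *\<^sub>R x, A x)" "v = (c *\<^sub>R y, A y)" "x \<in> DA" "y \<in> DA" by blast
  then show "u + v \<in> {(c *\<^sub>R x, A x) | x. x \<in> DA}"
    using A_add subspace_add[OF subspace_dom] by (auto simp: scaleR_add_right intro!: exI[of _ "x + y"])
next
  fix r :: real and u assume "u \<in> {(c *\<^sub>R x, A x) | x. x \<in> DA}"
  then obtain x where "u = (c *\<^sub>R x, A x)" "x \<in> DA" by blast
  then show "r *\<^sub>R u \<in> {(c *\<^sub>R x, A x) | x. x \<in> DA}"
    using A_scale subspace_scale[OF subspace_dom] by (auto intro!: exI[of _ "r *\<^sub>R x"])
qed

lemma scaled_graph_closed:
  assumes "c \<noteq> 0"
  shows "closed {(c *\<^sub>R x, A x) | x. x \<in> DA}"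
proof -
  have "{(c *\<^sub>R x, A x) | x. x \<in> DA} = (\<lambda>p. ((1 / c) *\<^sub>R fst p, snd p)) -` {(x, A x) | x. x \<in> DA}"
  proof (intro set_eqI iffI)
    fix p assume "p \<in> (\<lambda>p. ((1 / c) *\<^sub>R fst p, snd p)) -` {(x, A x) | x. x \<in> DA}"
    then obtain x where "x \<in> DA" "(1 / c) *\<^sub>R fst p = x" "snd p = A x" by auto
    then have "p = (c *\<^sub>R x, A x)" using assms by (auto simp: prod_eq_iff)
    with \<open>x \<in> DA\<close> show "p \<in> {(c *\<^sub>R x, A x) | x. x \<in> DA}" by blast
  qed (use assms in auto)
  moreover have "closed ((\<lambda>p. ((1 / c) *\<^sub>R fst p, snd p)) -` {(x, A x) | x. x \<in> DA})"
    by (intro continuous_closed_vimage closed_graph) (intro continuous_intros)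
  ultimately show ?thesis by simp
qed

text \<open>Existence: project \<open>(g / \<surd>a, h)\<close> orthogonally onto the graph of \<open>x \<mapsto> (\<surd>a x, A x)\<close>.\<close>
lemma resolvent_eq_exists:
  assumes "a > 0"
  shows "\<exists>u. resolvent_eq a g h u"
proof -
  define c where "c = sqrt a"
  have c: "c > 0" "c * c = a" using assms by (auto simp: c_def)
  have "c \<noteq> 0" using c by simp
  from orthogonal_projection_exists[OF scaled_graph_subspace scaled_graph_closed[OF this],
      of "((1 / c) *\<^sub>R g, h)"]
  obtain m where m: "m \<in> {(c *\<^sub>R x, A x) | x. x \<in> DA}"
    and perp: "\<forall>v \<in> {(c *\<^sub>R x, A x) | x. x \<in> DA}. inner (((1 / c) *\<^sub>R g, h) - m) v = 0"
    by blast
  then obtain u where u: "m = (c *\<^sub>R u, A u)" "u \<in> DA" by blast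
  have "inner (A u) (A x) + a * inner u x = inner g x + inner h (A x)" if "x \<in> DA" for x
  proof -
    have "inner ((1 / c) *\<^sub>R g - c *\<^sub>R u, h - A u) (c *\<^sub>R x, A x) = 0"
      using perp that u by fastforce
    then show ?thesis
      using c by (simp add: inner_diff_left algebra_simps)
  qed
  with u show ?thesis unfolding resolvent_eq_def by blast
qed

lemma resolvent_eq_unique:
  assumes "a > 0" "resolvent_eq a g h u" "resolvent_eq a g h v"
  shows "u = v"
proof -
  have uv: "u - v \<in> DA" "u \<in> DA" "v \<in> DA"
    using assms(2,3) subspace_diff[OF subspace_dom] by (auto simp: resolvent_eq_def)
  have "inner (A u) (A (u - v)) + a * inner u (u - v) = inner (A v) (A (u - v)) + a * inner v (u - v)"
    using assms(2,3) uv(1) unfolding resolvent_eq_def by auto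
  then have "norm (A (u - v)) ^ 2 + a * norm (u - v) ^ 2 = 0"
    by (simp add: A_diff[OF uv(2,3)] power2_norm_eq_inner inner_diff algebra_simps)
  moreover have "0 \<le> a * norm (u - v) ^ 2" using \<open>a > 0\<close> by simp
  ultimately have "a * norm (u - v) ^ 2 = 0" using zero_le_power2[of "norm (A (u - v))"] by linarith
  then show ?thesis using \<open>a > 0\<close> by simp
qed

lemma resolvent_eq_add:
  "resolvent_eq a g h u \<Longrightarrow> resolvent_eq a g' h' u' \<Longrightarrow> resolvent_eq a (g + g') (h + h') (u + u')"
  using subspace_add[OF subspace_dom] A_add
  by (simp add: resolvent_eq_def inner_add algebra_simps)

lemma resolvent_eq_scale:
  assumes "resolvent_eq a g h u"
  shows "resolvent_eq a (r *\<^sub>R g) (r *\<^sub>R h) (r *\<^sub>R u)"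
proof -
  have "r * (inner (A u) (A x) + a * inner u x) = r * (inner g x + inner h (A x))" if "x \<in> DA" for x
    using assms that by (simp add: resolvent_eq_def)
  then show ?thesis
    using assms subspace_scale[OF subspace_dom] A_scale
    by (simp add: resolvent_eq_def distrib_left mult.left_commute)
qed

lemma resolvent_eq_0_iff: "resolvent_eq a g 0 u \<longleftrightarrow> u \<in> TD \<and> T u + a *\<^sub>R u = g"
proof
  assume u: "resolvent_eq a g 0 u"
  then have "\<forall>x\<in>DA. inner (A x) (A u) = inner x (g - a *\<^sub>R u)"
    by (simp add: resolvent_eq_def inner_diff_right inner_commute eq_diff_eq)
  then have "A u \<in> Adom" "Aadj (A u) = g - a *\<^sub>R u" by (rule adj_eqI)+
  then show "u \<in> TD \<and> T u + a *\<^sub>R u = g"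
    using u by (auto simp: resolvent_eq_def T_dom_def T_op_def)
next
  assume "u \<in> TD \<and> T u + a *\<^sub>R u = g"
  then show "resolvent_eq a g 0 u"
    using inner_T T_dom_subset by (auto simp: resolvent_eq_def inner_add_left)
qed

lemma resolvent_eq_adj:
  assumes "h \<in> Adom" "resolvent_eq a g h u"
  shows "resolvent_eq a (g + Aadj h) 0 u"
proof -
  have "inner h (A x) = inner (Aadj h) x" if "x \<in> DA" for x
    using adj_inner[OF assms(1) that] by (simp add: inner_commute)
  then show ?thesis using assms(2) by (simp add: resolvent_eq_def inner_add_left)
qed

lemma T_shift_surj:
  assumes "a > 0"
  obtains x where "x \<in> TD" "T x + a *\<^sub>R x = g"
  using resolvent_eq_exists[OF assms, of g 0] resolvent_eq_0_iff by blast

lemma T_shift_inj: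
  assumes "a > 0" "x \<in> TD" "y \<in> TD" "T x + a *\<^sub>R x = T y + a *\<^sub>R y"
  shows "x = y"
  using resolvent_eq_unique[OF assms(1), of "T x + a *\<^sub>R x" 0 x y] assms(2-4)
  by (simp add: resolvent_eq_0_iff)

definition resolvent_adj :: "real \<Rightarrow> 'a \<Rightarrow> 'a" where
  "resolvent_adj a h = (THE u. resolvent_eq a 0 h u)"

lemma resolvent_adj_eqI:
  assumes "a > 0" "resolvent_eq a 0 h u"
  shows "resolvent_adj a h = u"
  unfolding resolvent_adj_def using assms resolvent_eq_unique by blast

lemma resolvent_eq_resolvent_adj:
  assumes "a > 0"
  shows "resolvent_eq a 0 h (resolvent_adj a h)"
  using resolvent_eq_exists[OF assms, of 0 h] resolvent_adj_eqI[OF assms] by metis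

text \<open>Testing the defining identity with \<open>u\<close> itself gives
  \<open>\<parallel>A u\<parallel>\<^sup>2 + a \<parallel>u\<parallel>\<^sup>2 = \<langle>h, A u\<rangle> \<le> \<parallel>A u\<parallel>\<^sup>2 + \<parallel>h\<parallel>\<^sup>2 / 4\<close>.\<close>
lemma norm_resolvent_adj_le:
  assumes "a > 0"
  shows "norm (resolvent_adj a h) \<le> norm h / (2 * sqrt a)"
proof -
  define u where "u = resolvent_adj a h"
  have "inner (A u) (A u) + a * inner u u = inner h (A u)"
    using resolvent_eq_resolvent_adj[OF assms, of h] by (simp add: u_def resolvent_eq_def)
  also have "\<dots> \<le> norm h * norm (A u)" by (rule norm_cauchy_schwarz)
  also have "\<dots> \<le> norm (A u) ^ 2 + norm h ^ 2 / 4"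
    using sum_squares_ge_zero[of "norm h / 2 - norm (A u)" 0] by (simp add: power2_eq_square algebra_simps)
  finally have "(2 * sqrt a * norm u) ^ 2 \<le> norm h ^ 2"
    using assms by (simp add: power2_norm_eq_inner power_mult_distrib)
  then have "2 * sqrt a * norm u \<le> norm h" by (rule power2_le_imp_le) simp
  then show ?thesis using assms by (simp add: u_def field_simps)
qed

lemma bounded_linear_resolvent_adj:
  assumes "a > 0"
  shows "bounded_linear (resolvent_adj a)"
proof (rule bounded_linear_intro[where K = "1 / (2 * sqrt a)"])
  show "resolvent_adj a (x + y) = resolvent_adj a x + resolvent_adj a y" for x y
    using resolvent_eq_add[OF resolvent_eq_resolvent_adj resolvent_eq_resolvent_adj] assms
    by (intro resolvent_adj_eqI) auto
  show "resolvent_adj a (r *\<^sub>R x) = r *\<^sub>R resolvent_adj a x" for r x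
    using resolvent_eq_scale[OF resolvent_eq_resolvent_adj] assms
    by (intro resolvent_adj_eqI) auto
  show "norm (resolvent_adj a x) \<le> norm x * (1 / (2 * sqrt a))" for x
    using norm_resolvent_adj_le[OF assms, of x] by simp
qed

lemma resolvent_adj_on_adj_dom:
  assumes "a > 0" "y \<in> Adom"
  shows "resolvent_adj a y \<in> TD" "T (resolvent_adj a y) + a *\<^sub>R resolvent_adj a y = Aadj y"
  using resolvent_eq_adj[OF assms(2) resolvent_eq_resolvent_adj[OF assms(1)]]
  by (simp_all add: resolvent_eq_0_iff)

lemma resolvent_adj_A:
  assumes "a > 0" "y \<in> DA" "x \<in> TD" and eq: "T x + a *\<^sub>R x = y"
  shows "resolvent_adj a (A y) = y - a *\<^sub>R x"
proof (rule resolvent_adj_eqI[OF assms(1)])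
  have xD: "x \<in> DA" using assms(3) T_dom_subset by blast
  have "inner (A (y - a *\<^sub>R x)) (A w) + a * inner (y - a *\<^sub>R x) w = inner (A y) (A w)"
    if "w \<in> DA" for w
  proof -
    have AxAw: "inner (A x) (A w) = inner y w - a * inner x w"
      using inner_T[OF assms(3) that] arg_cong[OF eq, of "\<lambda>v. inner v w"]
      by (simp add: inner_add_left)
    have Ay: "A (y - a *\<^sub>R x) = A y - a *\<^sub>R A x"
      using A_diff[OF assms(2) subspace_scale[OF subspace_dom xD]] A_scale[OF xD] by simp
    show ?thesis unfolding Ay by (simp add: AxAw inner_diff_left algebra_simps)
  qed
  then show "resolvent_eq a 0 (A y) (y - a *\<^sub>R x)"
    using assms(2) xD subspace_dom by (simp add: resolvent_eq_def subspace_diff subspace_scale)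
qed

lemma adj_dom_perp_eq_0:
  assumes "\<And>y. y \<in> Adom \<Longrightarrow> inner z y = 0"
  shows "z = 0"
proof -
  obtain u where u: "resolvent_eq 1 0 z u" using resolvent_eq_exists[of 1] by auto
  then have "\<forall>x\<in>DA. inner (A x) (z - A u) = inner x u"
    by (simp add: resolvent_eq_def inner_diff_right inner_commute algebra_simps)
  then have v: "z - A u \<in> Adom" "Aadj (z - A u) = u" by (rule adj_eqI)+
  have uD: "u \<in> DA" using u by (simp add: resolvent_eq_def)
  have "inner (z - A u) (z - A u) = inner z (z - A u) - inner (A u) (z - A u)"
    by (simp add: inner_diff_left)
  also have "\<dots> = - inner u u"
    using assms[OF v(1)] adj_inner[OF v(1) uD] v(2) by simp
  finally have "inner (z - A u) (z - A u) + inner u u = 0" by simp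
  then have "inner u u = 0" "inner (z - A u) (z - A u) = 0"
    using inner_ge_zero[of u] inner_ge_zero[of "z - A u"] by linarith+
  then show ?thesis using A_0 by simp
qed

lemma Rop_eq_resolvent_adj:
  assumes "a > 0"
  shows "Rop DA A a = resolvent_adj a"
  unfolding Rop_def
proof (rule the_equality)
  show "bounded_linear (resolvent_adj a) \<and>
      (\<forall>y\<in>Adom. resolvent_adj a y \<in> TD \<and> T (resolvent_adj a y) + a *\<^sub>R resolvent_adj a y = Aadj y)"
    using bounded_linear_resolvent_adj[OF assms] resolvent_adj_on_adj_dom[OF assms] by simp
next
  fix L assume L: "bounded_linear L \<and> (\<forall>y\<in>Adom. L y \<in> TD \<and> T (L y) + a *\<^sub>R L y = Aadj y)"
  have agree: "L y = resolvent_adj a y" if "y \<in> Adom" for y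
    by (rule T_shift_inj[OF assms]) (use L resolvent_adj_on_adj_dom[OF assms that] that in auto)
  have "{h. L h = resolvent_adj a h} = UNIV"
  proof (rule closed_subspace_eq_UNIV_if_perp_trivial)
    have "linear L" "linear (resolvent_adj a)"
      using L bounded_linear_resolvent_adj[OF assms] bounded_linear.linear by blast+
    then show "subspace {h. L h = resolvent_adj a h}"
      by (auto simp: subspace_def linear_add linear_scale linear_0)
    show "closed {h. L h = resolvent_adj a h}"
      using L bounded_linear_resolvent_adj[OF assms]
      by (intro closed_Collect_eq bounded_linear.continuous_on[of L] continuous_on_id
          bounded_linear.continuous_on[of "resolvent_adj a"]) auto
    show "z = 0" if "\<And>v. v \<in> {h. L h = resolvent_adj a h} \<Longrightarrow> inner z v = 0" for z
      using that agree by (intro adj_dom_perp_eq_0) auto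
  qed
  then show "L = resolvent_adj a" by auto
qed

end

section \<open>Spectral estimates\<close>

locale spectral_setting = closed_densely_defined DA A
  for DA :: "'a::{real_inner,complete_space} set" and A +
  fixes E :: "real \<Rightarrow> 'a \<Rightarrow> 'a"
  assumes resolution: "resolution_of_identity E (T_dom DA A) (T_op DA A)"
begin

lemma bounded_linear_E: "bounded_linear (E s)"
  and E_idem: "E s (E s x) = E s x"
  and E_self_adjoint: "inner (E s x) y = inner x (E s y)"
  and E_mono: "s \<le> t \<Longrightarrow> E s (E t x) = E s x"
  and E_right_cont: "((\<lambda>t. E t x) \<longlongrightarrow> E s x) (at_right s)"
  and E_at_bot: "((\<lambda>t. E t x) \<longlongrightarrow> 0) at_bot"
  and E_at_top: "((\<lambda>t. E t x) \<longlongrightarrow> x) at_top"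
  and T_dom_eq: "TD = {u. (\<integral>\<^sup>+ s. ennreal (s\<^sup>2) \<partial>spec_meas E u) < \<infinity>}"
  and T_polarization: "u \<in> TD \<Longrightarrow> v \<in> TD \<Longrightarrow> inner (T u) v =
     (integral\<^sup>L (spec_meas E (u + v)) (\<lambda>s. s) - integral\<^sup>L (spec_meas E (u - v)) (\<lambda>s. s)) / 4"
  using resolution unfolding resolution_of_identity_def by blast+

lemma E_diff: "E s (x - y) = E s x - E s y"
  using bounded_linear_E by (simp add: linear_simps)

lemma E_add: "E s (x + y) = E s x + E s y"
  using bounded_linear_E by (simp add: linear_simps)

lemma E_0: "E s 0 = 0"
  using bounded_linear_E by (simp add: linear_simps)

lemma E_mono': "s \<le> t \<Longrightarrow> E t (E s x) = E s x"
  by (rule vector_eq_rdot[THEN iffD1]) (simp add: E_self_adjoint E_mono)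

lemma E_E: "E r (E t x) = E (min r t) x"
proof (cases "r \<le> t")
  case True
  then show ?thesis using E_mono[OF True] by (simp add: min_def)
next
  case False
  then have "t \<le> r" by simp
  then show ?thesis using E_mono'[OF \<open>t \<le> r\<close>] by (simp add: min_def)
qed

lemma norm_E_le: "norm (E r w) \<le> norm w"
proof -
  have "inner (E r w) (w - E r w) = 0"
    by (simp add: inner_diff_right E_self_adjoint[symmetric] E_idem)
  then have "norm w ^ 2 = norm (E r w) ^ 2 + norm (w - E r w) ^ 2"
    using norm_add_Pythagorean[of "E r w" "w - E r w"] by (simp add: orthogonal_def)
  then show ?thesis by (simp add: power2_le_imp_le)
qed

definition spec_fun :: "'a \<Rightarrow> real \<Rightarrow> real" where
  "spec_fun u r = inner (E r u) u"

lemma spec_fun_eq: "spec_fun u r = norm (E r u) ^ 2"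
proof -
  have "inner (E r u) u = inner (E r (E r u)) u" by (simp add: E_idem)
  also have "\<dots> = inner (E r u) (E r u)" by (rule E_self_adjoint)
  finally show ?thesis by (simp add: spec_fun_def power2_norm_eq_inner)
qed

lemma spec_meas_eq: "spec_meas E u = interval_measure (spec_fun u)"
  by (simp add: spec_meas_def spec_fun_def[abs_def])

lemma sets_spec_meas [simp, measurable_cong]: "sets (spec_meas E u) = sets borel"
  and space_spec_meas [simp]: "space (spec_meas E u) = UNIV"
  by (simp_all add: spec_meas_eq)

lemma spec_fun_mono: "s \<le> t \<Longrightarrow> spec_fun u s \<le> spec_fun u t"
proof -
  assume "s \<le> t"
  then have "norm (E s u) \<le> norm (E t u)"
    using norm_E_le[of s "E t u"] by (simp add: E_mono)
  then show ?thesis by (simp add: spec_fun_eq power_mono)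
qed

lemma spec_fun_right_cont: "continuous (at_right r) (spec_fun u)"
  unfolding continuous_within spec_fun_def by (intro tendsto_intros E_right_cont)

lemma spec_fun_at_bot: "(spec_fun u \<longlongrightarrow> 0) at_bot"
  using tendsto_inner[OF E_at_bot tendsto_const] by (simp add: spec_fun_def[abs_def])

lemma spec_fun_at_top: "(spec_fun u \<longlongrightarrow> norm u ^ 2) at_top"
  using tendsto_inner[OF E_at_top tendsto_const] by (simp add: spec_fun_def[abs_def] power2_norm_eq_inner)

lemma emeasure_spec_meas_Ioc:
  "s \<le> t \<Longrightarrow> emeasure (spec_meas E u) {s<..t} = spec_fun u t - spec_fun u s"
  unfolding spec_meas_eq by (rule emeasure_interval_measure_Ioc) (auto intro: spec_fun_mono spec_fun_right_cont)

lemma emeasure_spec_meas_Iic: "emeasure (spec_meas E u) {..t} = spec_fun u t"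
  unfolding spec_meas_eq
  by (rule emeasure_interval_measure_Iic) (auto intro: spec_fun_mono spec_fun_right_cont spec_fun_at_bot)

lemma emeasure_spec_meas_UNIV: "emeasure (spec_meas E u) UNIV = norm u ^ 2"
  unfolding spec_meas_eq
  by (rule interval_measure_UNIV) (auto intro: spec_fun_mono spec_fun_right_cont spec_fun_at_bot spec_fun_at_top)

lemma finite_measure_spec_meas: "finite_measure (spec_meas E u)"
  by (rule finite_measureI) (simp add: emeasure_spec_meas_UNIV)

lemma spec_fun_band: "spec_fun (E t u - E s u) r = norm (E (min r t) u - E (min r s) u) ^ 2"
  by (simp add: spec_fun_eq E_diff E_E)

lemma norm_band_sq:
  assumes "s \<le> t"
  shows "norm (E t u - E s u) ^ 2 = spec_fun u t - spec_fun u s"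
proof -
  have "norm (E t u - E s u) ^ 2 = inner (E t u) (E t u) - 2 * inner (E t u) (E s u) + inner (E s u) (E s u)"
    by (simp add: power2_norm_eq_inner inner_diff inner_commute)
  also have "inner (E t u) (E s u) = inner (E s u) (E s u)"
    using E_self_adjoint[of t u "E s u"] E_self_adjoint[of s u "E s u"] E_mono'[OF assms] E_idem by simp
  finally show ?thesis by (simp add: spec_fun_eq power2_norm_eq_inner)
qed

lemma AE_spec_meas_band:
  assumes "s \<le> t"
  shows "AE x in spec_meas E (E t u - E s u). s < x \<and> x \<le> t"
proof (rule AE_I')
  let ?z = "E t u - E s u"
  let ?M = "spec_meas E ?z"
  have "emeasure ?M {..s} = 0"
    using assms by (simp add: emeasure_spec_meas_Iic spec_fun_band)
  moreover have "emeasure ?M (UNIV - {..t}) = 0"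
  proof -
    have "emeasure ?M (UNIV - {..t}) = emeasure ?M UNIV - emeasure ?M {..t}"
      using emeasure_compl[of "{..t}" ?M] finite_measure.emeasure_finite[OF finite_measure_spec_meas]
      by simp
    also have "\<dots> = 0"
      using assms by (simp add: emeasure_spec_meas_UNIV emeasure_spec_meas_Iic spec_fun_band)
    finally show ?thesis .
  qed
  ultimately show "{..s} \<union> (UNIV - {..t}) \<in> null_sets ?M"
    by (intro null_sets.Un null_setsI) auto
qed auto

lemma T_dom_if_concentrated:
  assumes "AE x in spec_meas E w. s < x \<and> x \<le> t"
  shows "w \<in> TD"
proof -
  let ?M = "spec_meas E w"
  let ?B = "(\<bar>s\<bar> + \<bar>t\<bar>)\<^sup>2"
  have "AE x in ?M. ennreal (x\<^sup>2) \<le> ennreal ?B"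
  proof (rule eventually_mono[OF assms])
    fix x assume "s < x \<and> x \<le> t"
    then have "\<bar>x\<bar>\<^sup>2 \<le> ?B" by (intro power_mono) auto
    then show "ennreal (x\<^sup>2) \<le> ennreal ?B" by (simp add: ennreal_leI)
  qed
  then have "(\<integral>\<^sup>+ x. ennreal (x\<^sup>2) \<partial>?M) \<le> (\<integral>\<^sup>+ x. ennreal ?B \<partial>?M)"
    by (rule nn_integral_mono_AE)
  also have "\<dots> = ennreal ?B * emeasure ?M UNIV" by (simp add: nn_integral_const)
  also have "\<dots> < \<infinity>" by (simp add: emeasure_spec_meas_UNIV ennreal_mult_less_top)
  finally show ?thesis by (simp add: T_dom_eq)
qed

lemma integral_spec_meas_bounds:
  assumes "AE x in spec_meas E w. s < x \<and> x \<le> t"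
  shows "s * norm w ^ 2 \<le> integral\<^sup>L (spec_meas E w) (\<lambda>x. x)"
    and "integral\<^sup>L (spec_meas E w) (\<lambda>x. x) \<le> t * norm w ^ 2"
proof -
  let ?M = "spec_meas E w"
  interpret finite_measure ?M by (rule finite_measure_spec_meas)
  have measure: "measure ?M UNIV = norm w ^ 2"
    by (simp add: measure_def emeasure_spec_meas_UNIV)
  have "AE x in ?M. norm x \<le> \<bar>s\<bar> + \<bar>t\<bar>" using assms by eventually_elim auto
  then have int: "integrable ?M (\<lambda>x. x)" by (intro integrable_const_bound) auto
  have "integral\<^sup>L ?M (\<lambda>x. s) \<le> integral\<^sup>L ?M (\<lambda>x. x)"
    by (rule integral_mono_AE[OF _ int]) (use assms in \<open>auto elim: eventually_mono\<close>)
  moreover have "integral\<^sup>L ?M (\<lambda>x. x) \<le> integral\<^sup>L ?M (\<lambda>x. t)"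
    by (rule integral_mono_AE[OF int]) (use assms in \<open>auto elim: eventually_mono\<close>)
  ultimately show "s * norm w ^ 2 \<le> integral\<^sup>L ?M (\<lambda>x. x)" "integral\<^sup>L ?M (\<lambda>x. x) \<le> t * norm w ^ 2"
    using measure by (simp_all add: mult.commute)
qed

lemma band_T_bounds:
  fixes u :: 'a
  assumes "s \<le> t"
  defines "z \<equiv> E t u - E s u"
  shows "z \<in> TD" "s * norm z ^ 2 \<le> inner (T z) z" "inner (T z) z \<le> t * norm z ^ 2"
proof -
  show zT: "z \<in> TD"
    unfolding z_def by (rule T_dom_if_concentrated[OF AE_spec_meas_band[OF assms(1)]])
  have "z + z = E t (2 *\<^sub>R u) - E s (2 *\<^sub>R u)" and "z - z = E t 0 - E s 0"
    by (simp_all add: z_def E_0 linear_simps bounded_linear_E scaleR_2)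
  then have "s * norm (z + z) ^ 2 \<le> integral\<^sup>L (spec_meas E (z + z)) (\<lambda>x. x)"
    and "integral\<^sup>L (spec_meas E (z + z)) (\<lambda>x. x) \<le> t * norm (z + z) ^ 2"
    and "integral\<^sup>L (spec_meas E (z - z)) (\<lambda>x. x) = 0"
    using integral_spec_meas_bounds[OF AE_spec_meas_band[OF assms(1), of "2 *\<^sub>R u"]]
      integral_spec_meas_bounds[OF AE_spec_meas_band[OF assms(1), of 0]]
    by (auto intro: antisym)
  moreover have "norm (z + z) ^ 2 = 4 * norm z ^ 2"
    by (simp add: scaleR_2[symmetric] power_mult_distrib)
  ultimately show "s * norm z ^ 2 \<le> inner (T z) z" "inner (T z) z \<le> t * norm z ^ 2"
    using T_polarization[OF zT zT] by simp_all
qed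

text \<open>Since \<open>T \<ge> 0\<close>, a band below a negative level is zero, so \<open>E\<close> is constant there.\<close>
lemma E_neg_eq_0:
  assumes "r < 0"
  shows "E r u = 0"
proof -
  have "E r' u = E r u" if "r' < r" for r'
  proof -
    let ?z = "E r u - E r' u"
    have "0 \<le> inner (T ?z) ?z" using inner_T_self[OF band_T_bounds(1)] that by simp
    also have "\<dots> \<le> r * norm ?z ^ 2" using band_T_bounds(3) that by simp
    finally have "norm ?z ^ 2 \<le> 0" using assms by (simp add: zero_le_mult_iff)
    then show ?thesis by simp
  qed
  then have "\<forall>\<^sub>F r' in at_bot. E r' u = E r u" by (auto simp: eventually_at_bot_dense)
  from Lim_transform_eventually[OF E_at_bot this] show ?thesis by (simp add: tendsto_const_iff)
qed

lemma T_inner_eq_0_if_E_orthogonal: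
  assumes "w \<in> TD" "z \<in> TD" and orth: "\<And>r. inner (E r w) (E r z) = 0"
  shows "inner (T w) z = 0"
proof -
  have "spec_fun (w + z) = spec_fun (w - z)"
    using orth by (simp add: fun_eq_iff spec_fun_eq power2_norm_eq_inner E_add E_diff
        inner_add inner_diff inner_commute)
  then have "spec_meas E (w + z) = spec_meas E (w - z)" by (simp add: spec_meas_eq)
  then show ?thesis using T_polarization[OF assms(1,2)] by simp
qed

lemma inner_band: "s \<le> t \<Longrightarrow> inner x (E t x - E s x) = norm (E t x - E s x) ^ 2"
  by (simp add: norm_band_sq spec_fun_def inner_diff_right inner_commute)

lemma inner_E_band:
  assumes "s \<le> t" "t \<le> r"
  shows "inner (E r x) (E t x - E s x) = norm (E t x - E s x) ^ 2"
proof -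
  have "inner (E r x) (E t x - E s x) = inner x (E t x - E s x)"
    using assms by (simp add: E_self_adjoint E_diff E_mono')
  then show ?thesis using inner_band[OF assms(1)] by simp
qed

text \<open>On the band \<open>z = (E\<^sub>t - E\<^sub>s) x\<close> the operator \<open>T + a\<close> is bounded below by \<open>max s 0 + a\<close>,
  and \<open>(T + a) x\<close> tested against \<open>z\<close> only sees the same band of \<open>y\<close>.\<close>
lemma band_resolvent_estimate:
  fixes x :: 'a
  assumes "a > 0" "s \<le> t" "x \<in> TD"
  defines "y \<equiv> T x + a *\<^sub>R x"
  shows "(max s 0 + a)\<^sup>2 * (spec_fun x t - spec_fun x s) \<le> spec_fun y t - spec_fun y s"
proof -
  define z where "z = E t x - E s x"
  have zT: "z \<in> TD" and T_lower: "s * norm z ^ 2 \<le> inner (T z) z"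
    using band_T_bounds[OF assms(2)] by (simp_all add: z_def)
  have "inner (E r (x - z)) (E r z) = 0" for r
  proof -
    have "E r z = E (min r t) x - E (min r s) x" by (simp add: z_def E_diff E_E)
    moreover have "inner (E r x) (E (min r t) x - E (min r s) x) = norm (E (min r t) x - E (min r s) x) ^ 2"
      using assms(2) by (intro inner_E_band) auto
    ultimately show ?thesis by (simp add: E_diff inner_diff_left power2_norm_eq_inner)
  qed
  then have "inner (T (x - z)) z = 0"
    using T_inner_eq_0_if_E_orthogonal T_diff(1)[OF assms(3) zT] zT by blast
  then have "inner y z = inner (T z) z + a * norm z ^ 2"
    using T_diff(2)[OF assms(3) zT] inner_band[OF assms(2), of x]
    by (simp add: y_def z_def inner_add_left inner_diff_left E_idem)
  moreover have "inner (T z) z \<ge> max s 0 * norm z ^ 2"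
    using T_lower inner_T_self[OF zT] by (simp add: max_def)
  moreover have "inner y z = inner (E t y - E s y) z"
  proof -
    have "E t z - E s z = z" using assms(2) by (simp add: z_def E_diff E_idem E_E min_def)
    then show ?thesis by (metis E_self_adjoint inner_diff_left inner_diff_right)
  qed
  moreover have "inner (E t y - E s y) z \<le> norm (E t y - E s y) * norm z"
    by (rule norm_cauchy_schwarz)
  ultimately have "(max s 0 + a) * norm z ^ 2 \<le> norm (E t y - E s y) * norm z"
    by (simp add: algebra_simps)
  then have "(max s 0 + a)\<^sup>2 * norm z ^ 2 \<le> norm (E t y - E s y) ^ 2"
    using assms(1) by (intro power2_le_if_mult_le) auto
  then show ?thesis using norm_band_sq[OF assms(2)] by (simp add: z_def)
qed

lemma spec_fun_Kset_0:
  assumes "y \<in> Kset E p k"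
  shows "spec_fun y 0 = 0"
proof -
  let ?M = "spec_meas E y"
  have "\<infinity> * emeasure ?M {0} = (\<integral>\<^sup>+ s. \<infinity> * indicator {0} s \<partial>?M)"
    by (rule nn_integral_cmult_indicator[symmetric]) simp
  also have "\<dots> \<le> set_nn_integral ?M {0..} (\<lambda>s. if s = 0 then \<infinity> else ennreal (s powr (-2 * p)))"
    by (intro nn_integral_mono) (auto simp: indicator_def)
  also have "\<dots> \<le> ennreal (k\<^sup>2)" using assms by (simp add: Kset_def)
  finally have zero: "{0} \<in> null_sets ?M"
    by (intro null_setsI) (auto simp: ennreal_top_mult top_unique split: if_splits)
  have neg: "{..<0} \<in> null_sets ?M"
  proof -
    have "{..<0::real} = (\<Union>n. {..- inverse (Suc n)})"
    proof (intro set_eqI iffI)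
      fix x :: real assume "x \<in> {..<0}"
      then obtain n where "inverse (Suc n) < - x" using reals_Archimedean[of "- x"] by auto
      then show "x \<in> (\<Union>n. {..- inverse (Suc n)})" by (intro UN_I[of n]) auto
    next
      fix x :: real assume "x \<in> (\<Union>n. {..- inverse (Suc n)})"
      then obtain n where "x \<le> - inverse (Suc n)" by auto
      moreover have "0 < inverse (real (Suc n))" by simp
      ultimately have "x < 0" by linarith
      then show "x \<in> {..<0}" by simp
    qed
    moreover have "{..- inverse (Suc n)} \<in> null_sets ?M" for n
      by (intro null_setsI) (simp_all add: emeasure_spec_meas_Iic spec_fun_eq E_neg_eq_0)
    ultimately show ?thesis by (simp add: null_sets_UN)
  qed
  have "{..0::real} = {..<0} \<union> {0}" by auto
  then have "emeasure ?M {..0} = 0" using null_sets.Un[OF neg zero] by auto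
  then show ?thesis
    using spec_fun_eq[of y 0] by (simp add: emeasure_spec_meas_Iic)
qed

text \<open>A lower Riemann-Stieltjes sum of \<open>\<integral> s\<^sup>-\<^sup>2\<^sup>p d(E\<^sub>s y, y)\<close> over an increasing positive grid.\<close>
lemma Kset_lower_sum:
  assumes y: "y \<in> Kset E p k" and "0 \<le> p" and t: "incseq t" "0 < t 0"
  shows "(\<Sum>i<N. t (Suc i) powr (-2 * p) * (spec_fun y (t (Suc i)) - spec_fun y (t i))) \<le> k\<^sup>2"
proof -
  let ?M = "spec_meas E y"
  let ?f = "\<lambda>s::real. if s = 0 then \<infinity> else ennreal (s powr (-2 * p))"
  let ?I = "\<lambda>i. {t i<..t (Suc i)}"
  have t_pos: "0 < t i" for i using t by (meson incseq_def order_less_le_trans zero_le)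
  have t_le: "t i \<le> t j" if "i \<le> j" for i j using t(1) that by (simp add: incseq_def)
  have "?I i \<inter> ?I j = {}" if "i < j" for i j
    using t_le[of "Suc i" j] that by auto
  then have disj: "disjoint_family_on ?I {..<N}"
    unfolding disjoint_family_on_def by (metis Int_commute linorder_neqE_nat)
  have w_le: "ennreal (t (Suc i) powr (-2 * p)) \<le> ?f x" if "x \<in> ?I i" for i x
    using that t_pos[of i] \<open>0 \<le> p\<close> by (auto intro!: ennreal_leI powr_mono2')
  have "ennreal (\<Sum>i<N. t (Suc i) powr (-2 * p) * (spec_fun y (t (Suc i)) - spec_fun y (t i)))
      = (\<Sum>i<N. ennreal (t (Suc i) powr (-2 * p)) * emeasure ?M (?I i))"
    using t_le spec_fun_mono by (subst sum_ennreal[symmetric])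
      (auto simp: emeasure_spec_meas_Ioc ennreal_mult' intro!: sum.cong)
  also have "\<dots> = (\<Sum>i<N. \<integral>\<^sup>+ x. ennreal (t (Suc i) powr (-2 * p)) * indicator (?I i) x \<partial>?M)"
    by (simp add: nn_integral_cmult_indicator)
  also have "\<dots> \<le> (\<Sum>i<N. \<integral>\<^sup>+ x. ?f x * indicator (?I i) x \<partial>?M)"
  proof (intro sum_mono nn_integral_mono)
    fix i x
    show "ennreal (t (Suc i) powr (-2 * p)) * indicator (?I i) x \<le> ?f x * indicator (?I i) x"
    proof (cases "x \<in> ?I i")
      case True
      then show ?thesis using w_le[OF True] by simp
    qed simp
  qed
  also have "\<dots> = (\<integral>\<^sup>+ x. ?f x * indicator (\<Union>i<N. ?I i) x \<partial>?M)"
    using disj by (simp add: nn_integral_sum[symmetric] indicator_UN_disjoint sum_distrib_left)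
  also have "\<dots> \<le> set_nn_integral ?M {0..} ?f"
  proof -
    have pos: "0 \<le> x" if "t i < x" for i x using t_pos[of i] that by simp
    show ?thesis by (intro nn_integral_mono mult_left_mono) (auto simp: indicator_def intro: pos)
  qed
  also have "\<dots> \<le> ennreal (k\<^sup>2)" using y by (simp add: Kset_def)
  finally show ?thesis by (simp add: ennreal_le_iff)
qed

lemma band_resolvent_estimate_pos:
  fixes x :: 'a
  assumes "a > 0" "0 < p" "p < 1" "0 < s" "s \<le> t" "x \<in> TD"
  defines "y \<equiv> T x + a *\<^sub>R x"
  shows "a\<^sup>2 * (spec_fun x t - spec_fun x s)
    \<le> (c_p p * a powr p)\<^sup>2 * s powr (-2 * p) * (spec_fun y t - spec_fun y s)"
proof -
  have main: "(s + a)\<^sup>2 * (spec_fun x t - spec_fun x s) \<le> spec_fun y t - spec_fun y s"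
    using band_resolvent_estimate[OF assms(1,5,6)] assms(4) by (simp add: y_def)
  have "a\<^sup>2 * (spec_fun x t - spec_fun x s) = (a / (s + a))\<^sup>2 * ((s + a)\<^sup>2 * (spec_fun x t - spec_fun x s))"
    using assms(1,4) by (simp add: power_divide)
  also have "\<dots> \<le> (a / (s + a))\<^sup>2 * (spec_fun y t - spec_fun y s)"
    using main by (intro mult_left_mono) auto
  also have "\<dots> \<le> (c_p p * a powr p * s powr (- p))\<^sup>2 * (spec_fun y t - spec_fun y s)"
  proof (rule mult_right_mono)
    show "(a / (s + a))\<^sup>2 \<le> (c_p p * a powr p * s powr (- p))\<^sup>2"
      using ratio_le_c_p[OF assms(4,1,2,3)] assms(1,4) by (intro power_mono) auto
    show "0 \<le> spec_fun y t - spec_fun y s" using spec_fun_mono[OF assms(5)] by simp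
  qed
  also have "(c_p p * a powr p * s powr (- p))\<^sup>2 = (c_p p * a powr p)\<^sup>2 * s powr (-2 * p)"
    using assms(4) by (simp add: power_mult_distrib powr_power)
  finally show ?thesis .
qed

lemma resolvent_grid_bound:
  fixes x :: 'a
  assumes a: "a > 0" and p: "0 < p" "p < 1" and y: "y \<in> Kset E p k"
    and x: "x \<in> TD" "T x + a *\<^sub>R x = y" and s0: "0 < s0" and q: "1 < q"
  shows "a\<^sup>2 * spec_fun x (s0 * q ^ N) \<le> spec_fun y s0 + q powr (2 * p) * (c_p p * a powr p)\<^sup>2 * k\<^sup>2"
proof -
  define t where "t i = s0 * q ^ i" for i
  define C where "C = q powr (2 * p) * (c_p p * a powr p)\<^sup>2"
  have t_pos: "0 < t i" for i using s0 q by (simp add: t_def)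
  have t_Suc: "t (Suc i) = q * t i" for i by (simp add: t_def)
  have "incseq t" using s0 q by (auto simp: incseq_def t_def intro: power_increasing)
  have step: "a\<^sup>2 * (spec_fun x (t (Suc i)) - spec_fun x (t i))
      \<le> C * (t (Suc i) powr (-2 * p) * (spec_fun y (t (Suc i)) - spec_fun y (t i)))" for i
  proof -
    have "a\<^sup>2 * (spec_fun x (t (Suc i)) - spec_fun x (t i))
        \<le> (c_p p * a powr p)\<^sup>2 * t i powr (-2 * p) * (spec_fun y (t (Suc i)) - spec_fun y (t i))"
      using band_resolvent_estimate_pos[OF a p t_pos[of i] incseq_SucD[OF \<open>incseq t\<close>] x(1)] x(2)
      by simp
    also have "t i powr (-2 * p) = q powr (2 * p) * t (Suc i) powr (-2 * p)"
      using q t_pos[of i] by (simp add: t_Suc powr_mult powr_minus field_simps)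
    finally show ?thesis by (simp add: C_def mult_ac)
  qed
  have "a\<^sup>2 * spec_fun x s0 \<le> spec_fun y s0"
    using band_resolvent_estimate[OF a _ x(1), of "-1" s0] s0 x(2)
    by (simp add: spec_fun_eq E_neg_eq_0)
  moreover have "a\<^sup>2 * (spec_fun x (t N) - spec_fun x (t 0))
      = (\<Sum>i<N. a\<^sup>2 * (spec_fun x (t (Suc i)) - spec_fun x (t i)))"
    by (simp add: sum_distrib_left[symmetric] sum_lessThan_telescope[of "\<lambda>i. spec_fun x (t i)"])
  moreover have "\<dots> \<le> C * (\<Sum>i<N. t (Suc i) powr (-2 * p) * (spec_fun y (t (Suc i)) - spec_fun y (t i)))"
    using step by (simp add: sum_distrib_left sum_mono)
  moreover have "\<dots> \<le> C * k\<^sup>2"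
    using Kset_lower_sum[OF y _ \<open>incseq t\<close> t_pos] p by (intro mult_left_mono) (auto simp: C_def)
  ultimately show ?thesis by (simp add: t_def C_def algebra_simps)
qed

lemma norm_resolvent_shift_le:
  fixes x :: 'a
  assumes a: "a > 0" and p: "0 < p" "p < 1" and k: "0 \<le> k" and y: "y \<in> Kset E p k"
    and x: "x \<in> TD" "T x + a *\<^sub>R x = y"
  shows "norm (a *\<^sub>R x) \<le> c_p p * k * a powr p"
proof -
  define C where "C = (c_p p * a powr p)\<^sup>2"
  have bound: "a\<^sup>2 * spec_fun x r \<le> spec_fun y s0 + q powr (2 * p) * C * k\<^sup>2"
    if "0 < s0" "1 < q" for r s0 q
  proof -
    obtain N where "r / s0 < q ^ N" using real_arch_pow[OF \<open>1 < q\<close>] by blast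
    then have "r \<le> s0 * q ^ N" using \<open>0 < s0\<close> by (simp add: field_simps)
    then have "a\<^sup>2 * spec_fun x r \<le> a\<^sup>2 * spec_fun x (s0 * q ^ N)"
      by (intro mult_left_mono spec_fun_mono) auto
    also have "\<dots> \<le> spec_fun y s0 + q powr (2 * p) * C * k\<^sup>2"
      using resolvent_grid_bound[OF a p y x that] by (simp add: C_def)
    finally show ?thesis .
  qed
  have lim_top: "((\<lambda>r. a\<^sup>2 * spec_fun x r) \<longlongrightarrow> a\<^sup>2 * norm x ^ 2) at_top"
    by (intro tendsto_mult tendsto_const spec_fun_at_top)
  have bound_s0: "a\<^sup>2 * norm x ^ 2 \<le> spec_fun y s0 + q powr (2 * p) * C * k\<^sup>2"
    if "0 < s0" "1 < q" for s0 q
    by (rule tendsto_le[OF _ tendsto_const lim_top]) (use bound[OF that] in auto)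
  have lim_0: "((\<lambda>s0. spec_fun y s0 + q powr (2 * p) * C * k\<^sup>2) \<longlongrightarrow> q powr (2 * p) * C * k\<^sup>2) (at_right 0)"
    for q
    using spec_fun_right_cont[of 0 y] spec_fun_Kset_0[OF y]
    by (auto simp: continuous_within intro!: tendsto_eq_intros)
  have bound_q: "a\<^sup>2 * norm x ^ 2 \<le> q powr (2 * p) * C * k\<^sup>2" if "1 < q" for q
    by (rule tendsto_le[OF _ lim_0 tendsto_const])
      (auto intro: eventually_mono[OF eventually_at_right_less] bound_s0[OF _ that])
  have lim_1: "((\<lambda>q. q powr (2 * p) * C * k\<^sup>2) \<longlongrightarrow> C * k\<^sup>2) (at_right 1)"
    by (auto intro!: tendsto_eq_intros)
  have "a\<^sup>2 * norm x ^ 2 \<le> C * k\<^sup>2"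
    by (rule tendsto_le[OF _ lim_1 tendsto_const])
      (auto intro: eventually_mono[OF eventually_at_right_less] bound_q)
  then have "norm (a *\<^sub>R x) ^ 2 \<le> (c_p p * k * a powr p)\<^sup>2"
    using a by (simp add: C_def power_mult_distrib mult_ac)
  moreover have "0 \<le> c_p p * k * a powr p" using c_p_pos[OF p] k by simp
  ultimately show ?thesis by (rule power2_le_imp_le)
qed

lemma Rop_error_le:
  assumes a: "a > 0" and p: "0 < p" "p < 1" and k: "0 \<le> k"
    and y: "y \<in> Kset E p k" "y \<in> DA" and f: "norm (A y - f) \<le> \<delta>"
  shows "norm (Rop DA A a f - y) \<le> \<delta> / (2 * sqrt a) + c_p p * k * a powr p"
proof -
  obtain x where x: "x \<in> TD" "T x + a *\<^sub>R x = y" using T_shift_surj[OF a] by blast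
  have "Rop DA A a f - y = resolvent_adj a (f - A y) - a *\<^sub>R x"
    using Rop_eq_resolvent_adj[OF a] resolvent_adj_A[OF a y(2) x]
      linear_diff[OF bounded_linear.linear[OF bounded_linear_resolvent_adj[OF a]], of f "A y"]
    by simp
  then have "norm (Rop DA A a f - y) \<le> norm (resolvent_adj a (f - A y)) + norm (a *\<^sub>R x)"
    using norm_triangle_ineq4 by metis
  also have "norm (resolvent_adj a (f - A y)) \<le> \<delta> / (2 * sqrt a)"
    using norm_resolvent_adj_le[OF a, of "f - A y"] f a
    by (simp add: norm_minus_commute divide_right_mono order_trans)
  also have "norm (a *\<^sub>R x) \<le> c_p p * k * a powr p"
    by (rule norm_resolvent_shift_le[OF a p k y(1) x])
  finally show ?thesis by simp
qed


lemma Rop_regularizer: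
  assumes p: "0 < p" "p < 1" and k: "0 < k"
    and a: "\<forall>\<delta>>0. a \<delta> > 0" "(a \<longlongrightarrow> 0) (at_right 0)"
      "((\<lambda>\<delta>. \<delta> / sqrt (a \<delta>)) \<longlongrightarrow> 0) (at_right 0)"
  shows "\<exists>\<eta>. (\<eta> \<longlongrightarrow> 0) (at_right 0) \<and>
    (\<forall>\<delta>>0. \<forall>v\<in>Sdelta (Kset E p k) DA A \<delta> (f \<delta>). norm (Rop DA A (a \<delta>) (f \<delta>) - v) \<le> \<eta> \<delta>)"
proof (intro exI conjI)
  show "((\<lambda>\<delta>. \<delta> / (2 * sqrt (a \<delta>)) + c_p p * k * a \<delta> powr p) \<longlongrightarrow> 0) (at_right 0)"
    by (rule error_bound_tendsto_0[OF a p(1)])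
  show "\<forall>\<delta>>0. \<forall>v\<in>Sdelta (Kset E p k) DA A \<delta> (f \<delta>).
      norm (Rop DA A (a \<delta>) (f \<delta>) - v) \<le> \<delta> / (2 * sqrt (a \<delta>)) + c_p p * k * a \<delta> powr p"
    using Rop_error_le[OF _ p] a(1) k by (auto simp: Sdelta_def)
qed

lemma Rop_optimal_rate:
  assumes p: "0 < p" "p < 1" and k: "0 < k" and "0 < \<delta>"
    and y: "y \<in> Kset E p k \<inter> DA" "norm (A y - fd) \<le> \<delta>"
  shows "norm (Rop DA A (b_p p k * \<delta> powr (2 / (2 * p + 1))) fd - y)
    \<le> C_p p k * \<delta> powr (2 * p / (2 * p + 1))"
  using Rop_error_le[OF _ p _ _ _ y(2), of "b_p p k * \<delta> powr (2 / (2 * p + 1))" k]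
    C_p_eq[OF \<open>0 < \<delta>\<close> p k] b_p_pos[OF p k] assms
  by auto

end

theorem theorem2p1:
  fixes DA :: "'a::{real_inner,complete_space} set" and A :: "'a \<Rightarrow> 'a"
    and E :: "real \<Rightarrow> 'a \<Rightarrow> 'a" and p kp :: real
  assumes lin: "linear_op DA A"
    and closedA: "closed {(x, A x) | x. x \<in> DA}"
    and dense: "closure DA = UNIV"
    and E: "resolution_of_identity E (T_dom DA A) (T_op DA A)"
    and p: "0 < p" "p < 1"
    and kp: "0 < kp"
  shows
    "(\<forall>(a :: real \<Rightarrow> real) (f :: real \<Rightarrow> 'a).
        (\<forall>\<delta>>0. a \<delta> > 0) \<and> (a \<longlongrightarrow> 0) (at_right 0) \<and>
        ((\<lambda>\<delta>. \<delta> / sqrt (a \<delta>)) \<longlongrightarrow> 0) (at_right 0) \<longrightarrow>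
        (\<exists>\<eta> :: real \<Rightarrow> real. (\<eta> \<longlongrightarrow> 0) (at_right 0) \<and>
           (\<forall>\<delta>>0. \<forall>v\<in>Sdelta (Kset E p kp) DA A \<delta> (f \<delta>).
              norm (Rop DA A (a \<delta>) (f \<delta>) - v) \<le> \<eta> \<delta>)))
     \<and>
     (\<forall>\<delta>>0. \<forall>fd :: 'a.
        (\<forall>y\<in>Kset E p kp \<inter> DA. norm (A y - fd) \<le> \<delta> \<longrightarrow>
           norm (Rop DA A (b_p p kp * \<delta> powr (2 / (2 * p + 1))) fd - y)
             \<le> C_p p kp * \<delta> powr (2 * p / (2 * p + 1))) \<and>
        (\<forall>a>0. a \<noteq> b_p p kp * \<delta> powr (2 / (2 * p + 1)) \<longrightarrow>
           \<delta> / (2 * sqrt (b_p p kp * \<delta> powr (2 / (2 * p + 1))))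
             + c_p p * kp * (b_p p kp * \<delta> powr (2 / (2 * p + 1))) powr p
           < \<delta> / (2 * sqrt a) + c_p p * kp * a powr p) \<and>
        \<delta> / (2 * sqrt (b_p p kp * \<delta> powr (2 / (2 * p + 1))))
          + c_p p * kp * (b_p p kp * \<delta> powr (2 / (2 * p + 1))) powr p
          = C_p p kp * \<delta> powr (2 * p / (2 * p + 1)))"
proof -
  interpret spectral_setting DA A E
    by unfold_locales (fact lin closedA dense E)+
  show ?thesis
  proof (intro conjI allI impI ballI)
    fix a :: "real \<Rightarrow> real" and f :: "real \<Rightarrow> 'a"
    assume "(\<forall>\<delta>>0. a \<delta> > 0) \<and> (a \<longlongrightarrow> 0) (at_right 0) \<and>
      ((\<lambda>\<delta>. \<delta> / sqrt (a \<delta>)) \<longlongrightarrow> 0) (at_right 0)"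
    then show "\<exists>\<eta>. (\<eta> \<longlongrightarrow> 0) (at_right 0) \<and>
        (\<forall>\<delta>>0. \<forall>v\<in>Sdelta (Kset E p kp) DA A \<delta> (f \<delta>). norm (Rop DA A (a \<delta>) (f \<delta>) - v) \<le> \<eta> \<delta>)"
      using Rop_regularizer[OF p kp] by blast
  qed (auto intro: Rop_optimal_rate[OF p kp] b_p_strict_min[OF _ p kp] C_p_eq[OF _ p kp])
qed

end
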